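(* Let $C\subset\mathbb{P}^2$ be a Frobenius nonclassical curve over $\mathbb{F}_q$ which is irreducible over $\mathbb{F}_q$ and admits a transverse line $L$ defined over $\mathbb{F}_q$. Then every point of $L\cap C$ is an $\mathbb{F}_q$-point, and $C$ is geometrically irreducible.
   Context: A plane curve $C=\{F=0\}$ over $\mathbb{F}_q$ is Frobenius nonclassical if $F$ divides $\sum_{i=0}^2 x_i^q\frac{\partial F}{\partial x_i}$. A line $L$ is transverse to $C$ if $L$ passes through no singular point of $C$ and is not tangent to $C$ at any smooth point of $C$. *)

theory Defs
  imports "HOL-Algebra.Algebraic_Closure_Type"
begin

text \<open>Polynomials in three variables x0, x1, x2 over a ring 'a are represented as
  nested univariate polynomials  'a poly poly poly : the innermost variable is x0,
  the middle one x1, the outermost one x2.\<close>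

type_synonym 'a poly3 = "'a poly poly poly"

definition X0 :: "'a::comm_ring_1 poly3" where "X0 = [:[:[:0, 1:]:]:]"
definition X1 :: "'a::comm_ring_1 poly3" where "X1 = [:[:0, 1:]:]"
definition X2 :: "'a::comm_ring_1 poly3" where "X2 = [:0, 1:]"

definition coeff3 :: "'a::zero poly3 \<Rightarrow> nat \<Rightarrow> nat \<Rightarrow> nat \<Rightarrow> 'a" where
  "coeff3 F i j k = coeff (coeff (coeff F k) j) i"

definition homogeneous3 :: "'a::zero poly3 \<Rightarrow> nat \<Rightarrow> bool" where
  "homogeneous3 F d \<longleftrightarrow> (\<forall>i j k. coeff3 F i j k \<noteq> 0 \<longrightarrow> i + j + k = d)"

definition pd0 :: "'a::idom poly3 \<Rightarrow> 'a poly3" where "pd0 F = map_poly (map_poly pderiv) F"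
definition pd1 :: "'a::idom poly3 \<Rightarrow> 'a poly3" where "pd1 F = map_poly pderiv F"
definition pd2 :: "'a::idom poly3 \<Rightarrow> 'a poly3" where "pd2 F = pderiv F"

definition eval3 :: "'a::comm_semiring_0 poly3 \<Rightarrow> 'a \<Rightarrow> 'a \<Rightarrow> 'a \<Rightarrow> 'a" where
  "eval3 F a0 a1 a2 = poly (map_poly (\<lambda>c. poly (map_poly (\<lambda>e. poly e a0) c) a1) F) a2"

definition map3 :: "('a::zero \<Rightarrow> 'b::zero) \<Rightarrow> 'a poly3 \<Rightarrow> 'b poly3" where
  "map3 f F = map_poly (map_poly (map_poly f)) F"

definition frobenius_nonclassical :: "'a::finite_field poly3 \<Rightarrow> bool" where
  "frobenius_nonclassical F \<longleftrightarrow>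
     F dvd (X0 ^ card (UNIV :: 'a set) * pd0 F + X1 ^ card (UNIV :: 'a set) * pd1 F + X2 ^ card (UNIV :: 'a set) * pd2 F)"

text \<open>Geometric points of P^2 are nonzero triples over the algebraic closure
  (statements below are invariant under scaling).\<close>
definition nonzero3 :: "'b::zero \<Rightarrow> 'b \<Rightarrow> 'b \<Rightarrow> bool" where
  "nonzero3 a0 a1 a2 \<longleftrightarrow> \<not> (a0 = 0 \<and> a1 = 0 \<and> a2 = 0)"

definition on_curve :: "'b::comm_ring_1 poly3 \<Rightarrow> 'b \<Rightarrow> 'b \<Rightarrow> 'b \<Rightarrow> bool" where
  "on_curve G x0 x1 x2 \<longleftrightarrow> nonzero3 x0 x1 x2 \<and> eval3 G x0 x1 x2 = 0"

definition singular_point :: "'b::idom poly3 \<Rightarrow> 'b \<Rightarrow> 'b \<Rightarrow> 'b \<Rightarrow> bool" where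
  "singular_point G x0 x1 x2 \<longleftrightarrow> on_curve G x0 x1 x2 \<and>
     eval3 (pd0 G) x0 x1 x2 = 0 \<and> eval3 (pd1 G) x0 x1 x2 = 0 \<and> eval3 (pd2 G) x0 x1 x2 = 0"

definition smooth_point :: "'b::idom poly3 \<Rightarrow> 'b \<Rightarrow> 'b \<Rightarrow> 'b \<Rightarrow> bool" where
  "smooth_point G x0 x1 x2 \<longleftrightarrow> on_curve G x0 x1 x2 \<and> \<not> singular_point G x0 x1 x2"

definition on_line :: "'b::comm_ring_1 \<Rightarrow> 'b \<Rightarrow> 'b \<Rightarrow> 'b \<Rightarrow> 'b \<Rightarrow> 'b \<Rightarrow> bool" where
  "on_line l0 l1 l2 x0 x1 x2 \<longleftrightarrow> nonzero3 x0 x1 x2 \<and> l0 * x0 + l1 * x1 + l2 * x2 = 0"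

definition tangent_at :: "'b::field poly3 \<Rightarrow> 'b \<Rightarrow> 'b \<Rightarrow> 'b \<Rightarrow> 'b \<Rightarrow> 'b \<Rightarrow> 'b \<Rightarrow> bool" where
  "tangent_at G l0 l1 l2 x0 x1 x2 \<longleftrightarrow> smooth_point G x0 x1 x2 \<and> on_line l0 l1 l2 x0 x1 x2 \<and>
     (\<exists>c. l0 = c * eval3 (pd0 G) x0 x1 x2 \<and> l1 = c * eval3 (pd1 G) x0 x1 x2
          \<and> l2 = c * eval3 (pd2 G) x0 x1 x2)"

definition transverse :: "'b::field poly3 \<Rightarrow> 'b \<Rightarrow> 'b \<Rightarrow> 'b \<Rightarrow> bool" where
  "transverse G l0 l1 l2 \<longleftrightarrow>
     (\<forall>x0 x1 x2. on_line l0 l1 l2 x0 x1 x2 \<longrightarrow> \<not> singular_point G x0 x1 x2) \<and>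
     (\<forall>x0 x1 x2. \<not> tangent_at G l0 l1 l2 x0 x1 x2)"

definition rational_point :: "('a \<Rightarrow> 'b::field) \<Rightarrow> 'b \<Rightarrow> 'b \<Rightarrow> 'b \<Rightarrow> bool" where
  "rational_point f x0 x1 x2 \<longleftrightarrow>
     (\<exists>c. c \<noteq> 0 \<and> c * x0 \<in> range f \<and> c * x1 \<in> range f \<and> c * x2 \<in> range f)"

end

(*
  Let x be a common point of C and L over the algebraic closure, and x^q its image under the
  q-power Frobenius. By Euler's formula the gradient of F at x is orthogonal to x, and Frobenius
  nonclassicality makes it orthogonal to x^q as well. The coefficient vector of L is orthogonal
  to x and, L being defined over F_q, also to x^q. If x and x^q were independent, L would be
  proportional to the gradient, i.e. tangent to C at x. Hence x^q is a multiple of x, which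
  means that x is F_q-rational.

  For geometric irreducibility take a prime factor G of F over the algebraic closure. It is
  homogeneous, so it vanishes at a point y of L; y lies on C, so it is F_q-rational by the first
  part and may be taken with coordinates in F_q. If G did not divide its Frobenius conjugate G',
  both would vanish at y and y would be a singular point of C on L.
  Thus G' = u G for a constant u; dividing G by one of its coefficients makes it Frobenius-fixed,
  hence defined over F_q, and the irreducibility of F over F_q forces F to be associated to G.
*)
theory Submission
  imports Defs "Subresultants.More_Homomorphisms"
begin

section \<open>Ring homomorphisms and polynomials in three variables\<close>

lemma comm_ring_hom_comp:
  assumes "comm_ring_hom f" "comm_ring_hom g"
  shows "comm_ring_hom (g \<circ> f)"
proof -
  interpret f: comm_ring_hom f by fact
  interpret g: comm_ring_hom g by fact
  show ?thesis by unfold_locales (simp_all add: hom_distribs)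
qed

lemma map3_eq_map_poly: "map3 f = map_poly (map_poly (map_poly f))"
  by (rule ext) (simp add: map3_def)

lemma (in comm_ring_hom) comm_ring_hom_map3: "comm_ring_hom (map3 hom)"
proof -
  interpret p1: map_poly_comm_ring_hom hom ..
  interpret p2: map_poly_comm_ring_hom "map_poly hom" ..
  interpret p3: map_poly_comm_ring_hom "map_poly (map_poly hom)" ..
  show ?thesis unfolding map3_eq_map_poly ..
qed

lemma (in inj_idom_hom) inj_idom_hom_map3: "inj_idom_hom (map3 hom)"
proof -
  interpret p1: map_poly_inj_idom_hom hom ..
  interpret p2: map_poly_inj_idom_hom "map_poly hom" ..
  interpret p3: map_poly_inj_idom_hom "map_poly (map_poly hom)" ..
  show ?thesis unfolding map3_eq_map_poly ..
qed

lemma map3_map3: "g 0 = 0 \<Longrightarrow> f 0 = 0 \<Longrightarrow> map3 f (map3 g F) = map3 (f \<circ> g) F"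
  by (simp add: map3_def map_poly_map_poly o_def)

lemma (in idom_isom) idom_isom_map3: "idom_isom (map3 hom)"
proof -
  interpret map3: inj_idom_hom "map3 hom" by (rule inj_idom_hom_map3)
  have "map3 hom (map3 (inv_into UNIV hom) F) = F" for F
    by (simp add: map3_map3 inv.hom_zero o_def) (simp add: map3_def map_poly_id'[abs_def])
  then have "surj (map3 hom)" by (metis surjI)
  then show ?thesis by unfold_locales
qed

lemma (in idom_isom) prime_elem_hom:
  assumes "prime_elem p"
  shows "prime_elem (hom p)"
proof (rule prime_elemI)
  show "hom p \<noteq> 0" "\<not> hom p dvd 1"
    using assms hom_dvd_hom[of p 1] by (auto simp: prime_elem_def)
  fix a b assume "hom p dvd a * b"
  then have "p dvd inv_into UNIV hom a * inv_into UNIV hom b" by (simp add: inv.hom_mult)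
  then have "p dvd inv_into UNIV hom a \<or> p dvd inv_into UNIV hom b"
    using assms by (simp add: prime_elem_dvd_mult_iff)
  then show "hom p dvd a \<or> hom p dvd b" by simp
qed

lemma eval3_eq_comp:
  "(\<lambda>F. eval3 F a0 a1 a2) =
     (\<lambda>p. poly p a2) \<circ> map_poly ((\<lambda>p. poly p a1) \<circ> map_poly (\<lambda>p. poly p a0))"
  by (rule ext) (simp add: eval3_def o_def)

interpretation eval3_hom: comm_ring_hom "\<lambda>F. eval3 F a0 a1 a2" for a0 a1 a2
proof -
  interpret eval0: map_poly_comm_ring_hom "\<lambda>p. poly p a0" ..
  interpret eval01: map_poly_comm_ring_hom "(\<lambda>p. poly p a1) \<circ> map_poly (\<lambda>p. poly p a0)"
    by (intro map_poly_comm_ring_hom.intro comm_ring_hom_comp eval0.comm_ring_hom_axioms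
        poly_hom.comm_ring_hom_axioms)
  show "comm_ring_hom (\<lambda>F. eval3 F a0 a1 a2)" unfolding eval3_eq_comp
    by (intro comm_ring_hom_comp eval01.comm_ring_hom_axioms poly_hom.comm_ring_hom_axioms)
qed

lemma (in comm_ring_hom) hom_eval3:
  "hom (eval3 F a0 a1 a2) = eval3 (map3 hom F) (hom a0) (hom a1) (hom a2)"
  by (simp add: eval3_def map3_def map_poly_map_poly o_def flip: poly_map_poly)

lemma (in idom_hom) map3_pd0: "map3 hom (pd0 F) = pd0 (map3 hom F)"
proof -
  interpret p1: map_poly_idom_hom hom ..
  show ?thesis by (simp add: map3_def pd0_def map_poly_map_poly o_def map_poly_pderiv)
qed

lemma (in idom_hom) map3_pd1: "map3 hom (pd1 F) = pd1 (map3 hom F)"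
proof -
  interpret p1: map_poly_idom_hom hom ..
  interpret p2: map_poly_idom_hom "map_poly hom" ..
  show ?thesis by (simp add: map3_def pd1_def map_poly_map_poly o_def p1.map_poly_pderiv)
qed

lemma (in idom_hom) map3_pd2: "map3 hom (pd2 F) = pd2 (map3 hom F)"
proof -
  interpret p1: map_poly_idom_hom hom ..
  interpret p2: map_poly_idom_hom "map_poly hom" ..
  show ?thesis by (simp add: map3_def pd2_def p2.map_poly_pderiv)
qed

lemma (in comm_ring_hom) map3_X: "map3 hom X0 = X0" "map3 hom X1 = X1" "map3 hom X2 = X2"
  by (simp_all add: map3_def X0_def X1_def X2_def)

lemma eval3_X [simp]: "eval3 X0 a0 a1 a2 = a0" "eval3 X1 a0 a1 a2 = a1" "eval3 X2 a0 a1 a2 = a2"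
  by (simp_all add: eval3_def X0_def X1_def X2_def)

section \<open>Coefficients, monomials and partial derivatives\<close>

lemma poly3_eqI: "(\<And>i j k. coeff3 F i j k = coeff3 G i j k) \<Longrightarrow> F = G"
  unfolding coeff3_def by (intro poly_eqI) auto

lemma coeff3_add [simp]: "coeff3 (F + G) i j k = coeff3 F i j k + coeff3 G i j k"
  by (simp add: coeff3_def)

lemma coeff3_0 [simp]: "coeff3 0 i j k = 0"
  by (simp add: coeff3_def)

lemma coeff3_map3: "f 0 = 0 \<Longrightarrow> coeff3 (map3 f F) i j k = f (coeff3 F i j k)"
  by (simp add: coeff3_def map3_def coeff_map_poly)

abbreviation monom3 :: "'a::zero \<Rightarrow> nat \<Rightarrow> nat \<Rightarrow> nat \<Rightarrow> 'a poly3" where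
  "monom3 c i j k \<equiv> monom (monom (monom c i) j) k"

lemma coeff3_monom3:
  "coeff3 (monom3 c i' j' k') i j k = (if i' = i \<and> j' = j \<and> k' = k then c else 0)"
  by (simp add: coeff3_def coeff_monom)

lemma poly_induct_monom [case_names 0 add monom]:
  assumes "P 0" "\<And>p q. P p \<Longrightarrow> P q \<Longrightarrow> P (p + q)" "\<And>c n. P (monom c n)"
  shows "P p"
proof -
  have "P (\<Sum>i\<in>A. monom (coeff p i) i)" if "finite A" for A
    using that by induction (simp_all add: assms)
  then show ?thesis
    using poly_as_sum_of_monoms[of p] by (metis finite_atMost)
qed

lemma poly3_induct [case_names 0 add monom]:
  fixes F :: "'a::comm_monoid_add poly3"
  assumes zero: "P 0" and add: "\<And>F G. P F \<Longrightarrow> P G \<Longrightarrow> P (F + G)"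
    and monomial: "\<And>c i j k. P (monom3 c i j k)"
  shows "P F"
proof (induction F rule: poly_induct_monom)
  case (monom c k)
  show ?case
  proof (induction c rule: poly_induct_monom)
    case (monom c j)
    show ?case
      by (induction c rule: poly_induct_monom) (simp_all add: zero add monomial flip: add_monom)
  qed (simp_all add: zero add flip: add_monom)
qed (simp_all add: zero add)

lemma eval3_monom3:
  "eval3 (monom3 (c::'a::comm_semiring_1) i j k) a0 a1 a2 = c * a0 ^ i * a1 ^ j * a2 ^ k"
  by (simp add: eval3_def map_poly_monom poly_monom mult.assoc)

definition is_derivation :: "('a::comm_ring_1 \<Rightarrow> 'a) \<Rightarrow> bool" where
  "is_derivation D \<longleftrightarrow> (\<forall>x y. D (x + y) = D x + D y) \<and> (\<forall>x y. D (x * y) = x * D y + D x * y)"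

lemma is_derivationD:
  assumes "is_derivation D"
  shows "D (x + y) = D x + D y" "D (x * y) = x * D y + D x * y" "D 0 = 0"
proof -
  show add: "D (x + y) = D x + D y" for x y
    using assms by (simp add: is_derivation_def)
  show "D (x * y) = x * D y + D x * y"
    using assms by (simp add: is_derivation_def)
  show "D 0 = 0" using add[of 0 0] by simp
qed

lemma is_derivation_sum:
  assumes "is_derivation D"
  shows "D (sum f A) = (\<Sum>x\<in>A. D (f x))"
  by (induction A rule: infinite_finite_induct) (simp_all add: is_derivationD[OF assms])

lemma is_derivation_pderiv: "is_derivation pderiv"
  by (simp add: is_derivation_def pderiv_add pderiv_mult)

lemma is_derivation_map_poly:
  assumes D: "is_derivation D"
  shows "is_derivation (map_poly D)"
  unfolding is_derivation_def
proof (intro conjI allI)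
  fix x y :: "'a poly"
  show "map_poly D (x + y) = map_poly D x + map_poly D y"
    by (rule poly_eqI) (simp add: coeff_map_poly is_derivationD[OF D])
  show "map_poly D (x * y) = x * map_poly D y + map_poly D x * y"
    by (rule poly_eqI)
      (simp add: coeff_map_poly coeff_mult is_derivationD[OF D] is_derivation_sum[OF D] sum.distrib)
qed

lemma is_derivation_pd: "is_derivation pd0" "is_derivation pd1" "is_derivation pd2"
  unfolding pd0_def[abs_def] pd1_def[abs_def] pd2_def[abs_def]
  by (intro is_derivation_map_poly is_derivation_pderiv)+

lemma coeff3_pd:
  "coeff3 (pd0 F) i j k = of_nat (Suc i) * coeff3 F (Suc i) j k"
  "coeff3 (pd1 F) i j k = of_nat (Suc j) * coeff3 F i (Suc j) k"
  "coeff3 (pd2 F) i j k = of_nat (Suc k) * coeff3 F i j (Suc k)"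
  by (simp_all add: coeff3_def pd0_def pd1_def pd2_def coeff_map_poly coeff_pderiv of_nat_poly)

lemma coeff3_X_mult:
  "coeff3 (X0 * F) i j k = (if i = 0 then 0 else coeff3 F (i - 1) j k)"
  "coeff3 (X1 * F) i j k = (if j = 0 then 0 else coeff3 F i (j - 1) k)"
  "coeff3 (X2 * F) i j k = (if k = 0 then 0 else coeff3 F i j (k - 1))"
  by (simp_all add: coeff3_def X0_def X1_def X2_def coeff_pCons split: nat.split)

lemma coeff3_of_nat_mult: "coeff3 (of_nat n * F) i j k = of_nat n * coeff3 F i j k"
  by (simp add: coeff3_def of_nat_poly)

lemma coeff3_euler_operator:
  "coeff3 (X0 * pd0 F + X1 * pd1 F + X2 * pd2 F) i j k = of_nat (i + j + k) * coeff3 F i j k"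
  by (simp add: coeff3_X_mult coeff3_pd algebra_simps)

lemma euler_identity:
  assumes "homogeneous3 F d"
  shows "X0 * pd0 F + X1 * pd1 F + X2 * pd2 F = of_nat d * F"
proof (rule poly3_eqI)
  fix i j k
  show "coeff3 (X0 * pd0 F + X1 * pd1 F + X2 * pd2 F) i j k = coeff3 (of_nat d * F) i j k"
    using assms unfolding coeff3_euler_operator coeff3_of_nat_mult homogeneous3_def
    by (cases "coeff3 F i j k = 0") auto
qed

lemma euler_at_zero:
  assumes "homogeneous3 F d" "eval3 F a0 a1 a2 = 0"
  shows "a0 * eval3 (pd0 F) a0 a1 a2 + a1 * eval3 (pd1 F) a0 a1 a2 + a2 * eval3 (pd2 F) a0 a1 a2
    = 0"
  using arg_cong[OF euler_identity[OF assms(1)], of "\<lambda>G. eval3 G a0 a1 a2"] assms(2)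
  by (simp add: eval3_hom.hom_add eval3_hom.hom_mult eval3_hom.hom_of_nat)

lemma singular_point_mult:
  assumes "eval3 G x0 x1 x2 = 0" "eval3 H x0 x1 x2 = 0" "nonzero3 x0 x1 x2"
  shows "singular_point (G * H) x0 x1 x2"
  using assms
  by (simp add: singular_point_def on_curve_def eval3_hom.hom_add eval3_hom.hom_mult
      is_derivationD[OF is_derivation_pd(1)] is_derivationD[OF is_derivation_pd(2)]
      is_derivationD[OF is_derivation_pd(3)])

section \<open>Constant and homogeneous polynomials\<close>

lemma homogeneous3_map3:
  assumes "f 0 = 0" "homogeneous3 F d"
  shows "homogeneous3 (map3 f F) d"
  unfolding homogeneous3_def coeff3_map3[where f=f, OF assms(1)]
proof (intro allI impI)
  fix i j k assume "f (coeff3 F i j k) \<noteq> 0"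
  then have "coeff3 F i j k \<noteq> 0" using assms(1) by auto
  then show "i + j + k = d" using assms(2) by (simp add: homogeneous3_def)
qed

definition const3 :: "'a::zero \<Rightarrow> 'a poly3" where
  "const3 c = [:[:[:c:]:]:]"

interpretation const3: comm_ring_hom "const3 :: 'a::comm_ring_1 \<Rightarrow> _"
proof -
  have const3_eq: "const3 = coeff_lift \<circ> coeff_lift \<circ> (coeff_lift :: 'a \<Rightarrow> _)"
    by (simp add: const3_def fun_eq_iff)
  show "comm_ring_hom (const3 :: 'a \<Rightarrow> _)"
    unfolding const3_eq by (intro comm_ring_hom_comp coeff_lift_hom.comm_ring_hom_axioms)
qed

lemma coeff3_const3: "coeff3 (const3 c) i j k = (if i = 0 \<and> j = 0 \<and> k = 0 then c else 0)"
  by (simp add: coeff3_def const3_def coeff_pCons split: nat.split)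

lemma coeff3_const3_mult: "coeff3 (const3 c * F) i j k = c * coeff3 F i j k"
  by (simp add: coeff3_def const3_def)

lemma is_unit_poly3_iff: "is_unit (U :: 'a::field poly3) \<longleftrightarrow> (\<exists>c. c \<noteq> 0 \<and> U = const3 c)"
proof
  assume "is_unit U"
  then obtain c1 where "U = [:c1:]" "c1 dvd 1" using is_unit_poly_iff[of U] by blast
  moreover from \<open>c1 dvd 1\<close> obtain c2 where "c1 = [:c2:]" "c2 dvd 1"
    using is_unit_poly_iff[of c1] by blast
  moreover from \<open>c2 dvd 1\<close> obtain c where "c2 = [:c:]" "c dvd 1"
    using is_unit_poly_iff[of c2] by blast
  ultimately show "\<exists>c. c \<noteq> 0 \<and> U = const3 c"
    by (auto simp: const3_def)
next
  assume "\<exists>c. c \<noteq> 0 \<and> U = const3 c"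
  then obtain c where "c \<noteq> 0" "U = const3 c" by blast
  then have "U * const3 (inverse c) = 1"
    by (simp flip: const3.hom_mult)
  then show "is_unit U" by (rule dvdI[OF sym])
qed

lemma (in field_hom) is_unit_map3_iff: "is_unit (map3 hom F) \<longleftrightarrow> is_unit F"
proof
  assume "is_unit (map3 hom F)"
  then obtain c where "c \<noteq> 0" and c: "map3 hom F = const3 c"
    by (auto simp: is_unit_poly3_iff)
  have "F = const3 (coeff3 F 0 0 0)"
  proof (rule poly3_eqI)
    fix i j k
    show "coeff3 F i j k = coeff3 (const3 (coeff3 F 0 0 0)) i j k"
      using arg_cong[OF c, of "\<lambda>G. coeff3 G i j k"]
      by (auto simp: coeff3_map3 coeff3_const3)
  qed
  moreover have "coeff3 F 0 0 0 \<noteq> 0"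
    using arg_cong[OF c, of "\<lambda>G. coeff3 G 0 0 0"] \<open>c \<noteq> 0\<close> by (auto simp: coeff3_map3 coeff3_const3)
  ultimately show "is_unit F" by (metis is_unit_poly3_iff)
next
  interpret map3: comm_ring_hom "map3 hom" by (rule comm_ring_hom_map3)
  show "is_unit F \<Longrightarrow> is_unit (map3 hom F)" by (rule map3.hom_dvd_1)
qed

lemma homogeneous3_0_eq_const3: "homogeneous3 F 0 \<Longrightarrow> F = const3 (coeff3 F 0 0 0)"
  by (rule poly3_eqI) (auto simp: homogeneous3_def coeff3_const3)

lemma monom3_eq_const3_mult:
  "monom3 (c::'a::comm_ring_1) i j k = const3 c * X0 ^ i * X1 ^ j * X2 ^ k"
proof -
  have X: "X0 = monom3 1 1 0 0" "X1 = monom3 1 0 1 0" "X2 = monom3 (1::'a) 0 0 1"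
    "const3 c = monom3 c 0 0 0"
    by (simp_all add: X0_def X1_def X2_def const3_def monom_Suc monom_0)
  show ?thesis unfolding X by (simp add: monom_power mult_monom)
qed

text \<open>\<open>F(t X0, t X1, t X2)\<close> as a polynomial in the new variable \<open>t\<close>.\<close>

definition homogeneous_parts :: "'a::comm_ring_1 poly3 \<Rightarrow> 'a poly3 poly" where
  "homogeneous_parts F = eval3 (map3 (\<lambda>c. [:const3 c:]) F) (monom X0 1) (monom X1 1) (monom X2 1)"

interpretation homogeneous_parts: comm_ring_hom "homogeneous_parts :: 'a::comm_ring_1 poly3 \<Rightarrow> _"
proof -
  have "comm_ring_hom (\<lambda>c::'a. [:const3 c:])"
    using comm_ring_hom_comp[OF const3.comm_ring_hom_axioms coeff_lift_hom.comm_ring_hom_axioms]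
    by (simp add: o_def)
  then have "comm_ring_hom (map3 (\<lambda>c::'a. [:const3 c:]))"
    by (rule comm_ring_hom.comm_ring_hom_map3)
  from comm_ring_hom_comp[OF this eval3_hom.comm_ring_hom_axioms]
  show "comm_ring_hom (homogeneous_parts :: 'a poly3 \<Rightarrow> _)"
    by (simp add: o_def homogeneous_parts_def[abs_def])
qed

lemma homogeneous_parts_monom3:
  "homogeneous_parts (monom3 c i j k) = monom (monom3 c i j k) (i + j + k)"
proof -
  have "homogeneous_parts (monom3 c i j k) =
      monom (const3 c) 0 * monom (X0 ^ i) i * monom (X1 ^ j) j * monom (X2 ^ k) k"
    by (simp add: homogeneous_parts_def map3_def map_poly_monom eval3_monom3 monom_power monom_0)
  also have "\<dots> = monom (monom3 c i j k) (i + j + k)"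
    by (simp add: mult_monom monom3_eq_const3_mult)
  finally show ?thesis .
qed

lemma coeff_homogeneous_parts:
  "coeff3 (coeff (homogeneous_parts F) n) i j k = (if i + j + k = n then coeff3 F i j k else 0)"
  by (induction F rule: poly3_induct)
    (auto simp: homogeneous_parts.hom_add homogeneous_parts_monom3 coeff_monom coeff3_monom3)

lemma homogeneous_parts_eq_monom: "homogeneous3 F d \<Longrightarrow> homogeneous_parts F = monom F d"
  by (intro poly_eqI poly3_eqI)
    (auto simp: coeff_homogeneous_parts coeff_monom homogeneous3_def coeff3_monom3)

lemma homogeneous3_if_parts_monom:
  assumes "\<And>n. coeff (homogeneous_parts F) n \<noteq> 0 \<Longrightarrow> n = e"
  shows "homogeneous3 F e"
  unfolding homogeneous3_def
proof (intro allI impI)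
  fix i j k
  assume "coeff3 F i j k \<noteq> 0"
  then have "coeff (homogeneous_parts F) (i + j + k) \<noteq> 0"
    by (metis coeff_homogeneous_parts coeff3_0)
  then show "i + j + k = e" by (rule assms)
qed

lemma eval3_scale:
  "eval3 F (t * a0) (t * a1) (t * a2) =
    poly (map_poly (\<lambda>G. eval3 G a0 a1 a2) (homogeneous_parts F)) t"
  by (induction F rule: poly3_induct)
    (simp_all add: eval3_hom.hom_add homogeneous_parts.hom_add eval3_hom.map_poly_hom_add
      homogeneous_parts_monom3 eval3_monom3 map_poly_monom poly_monom power_mult_distrib power_add
      mult_ac)

lemma eval3_homogeneous_scale:
  "homogeneous3 (F :: 'a::comm_ring_1 poly3) d \<Longrightarrow>
    eval3 F (t * a0) (t * a1) (t * a2) = t ^ d * eval3 F a0 a1 a2"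
  by (simp add: eval3_scale homogeneous_parts_eq_monom map_poly_monom poly_monom)

lemma order_0_le_if_coeff_nonzero:
  fixes p :: "'a::idom poly"
  assumes "coeff p n \<noteq> 0"
  shows "order 0 p \<le> n"
proof -
  have "p \<noteq> 0" using assms by auto
  then have "monom 1 (order 0 p) dvd p" by (simp add: monom_1_dvd_iff)
  then show ?thesis using assms by (metis monom_1_dvd_iff' not_le)
qed

lemma homogeneous3_factor:
  fixes G H :: "'a::idom poly3"
  assumes "homogeneous3 (G * H) d" "G * H \<noteq> 0"
  shows "\<exists>e. homogeneous3 G e"
proof -
  define P Q where "P = homogeneous_parts G" and "Q = homogeneous_parts H"
  have PQ: "P * Q = monom (G * H) d"
    using homogeneous_parts_eq_monom[OF assms(1)]
    by (simp add: P_def Q_def homogeneous_parts.hom_mult)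
  then have "P * Q \<noteq> 0" "P \<noteq> 0" "Q \<noteq> 0" using assms(2) by auto
  have "order 0 (P * Q) = order 0 P + order 0 Q"
    using \<open>P * Q \<noteq> 0\<close> by (rule order_mult)
  then have "order 0 P + order 0 Q = d"
    using PQ assms(2) by simp
  moreover have "degree P + degree Q = d"
    using degree_mult_eq[OF \<open>P \<noteq> 0\<close> \<open>Q \<noteq> 0\<close>] PQ assms(2) by (simp add: degree_monom_eq)
  moreover have "order 0 P \<le> degree P" "order 0 Q \<le> degree Q"
    using order_degree \<open>P \<noteq> 0\<close> \<open>Q \<noteq> 0\<close> by blast+
  ultimately have order_eq_degree: "order 0 P = degree P" by linarith
  have "homogeneous3 G (degree P)"
  proof (rule homogeneous3_if_parts_monom)
    fix n assume "coeff (homogeneous_parts G) n \<noteq> 0"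
    then show "n = degree P"
      using order_0_le_if_coeff_nonzero[of P n] le_degree[of P n] order_eq_degree
      by (simp add: P_def)
  qed
  then show ?thesis ..
qed

section \<open>The Frobenius map of the algebraic closure\<close>

lemma card_finite_field_ge_2: "card (UNIV :: 'a::finite_field set) \<ge> 2"
proof -
  have "card {0, 1 :: 'a} \<le> card (UNIV :: 'a set)" by (rule card_mono) auto
  then show ?thesis by simp
qed

text \<open>\<open>(X + 1)^q - X^q - 1\<close> vanishes on all \<open>q\<close> points of the field but has degree below \<open>q\<close>.\<close>

lemma of_nat_card_choose_eq_0:
  assumes "0 < k" "k < card (UNIV :: 'a::finite_field set)"
  shows "(of_nat (card (UNIV :: 'a set) choose k) :: 'a) = 0"
proof -
  define q where "q = card (UNIV :: 'a set)"
  define P :: "'a poly" where "P = [:1, 1:] ^ q - monom 1 q - 1"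
  have "q \<ge> 2" unfolding q_def by (rule card_finite_field_ge_2)
  have "P = 0"
  proof (rule ccontr)
    assume "P \<noteq> 0"
    have "degree ([:1, 1:] ^ q :: 'a poly) \<le> q"
      using degree_power_le[of "[:1, 1:] :: 'a poly" q] by simp
    then have "degree P \<le> q" unfolding P_def
      by (intro degree_diff_le) (auto simp: degree_monom_le)
    moreover have "coeff P q = 0"
      using \<open>q \<ge> 2\<close> coeff_linear_poly_power[of q q "1::'a" 1] by (simp add: P_def coeff_monom)
    ultimately have "degree P < q"
      using \<open>P \<noteq> 0\<close> by (metis le_neq_implies_less leading_coeff_0_iff)
    moreover have "{x. poly P x = 0} = UNIV"
      by (auto simp: P_def q_def poly_monom finite_field_power_card_eq_same add.commute)
    then have "q \<le> degree P"
      using card_poly_roots_bound[OF \<open>P \<noteq> 0\<close>] by (simp add: q_def)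
    ultimately show False by simp
  qed
  moreover have "coeff P k = of_nat (q choose k)"
    using assms coeff_linear_poly_power[of k q "1::'a" 1] by (simp add: P_def coeff_monom q_def)
  ultimately show ?thesis by (simp add: q_def)
qed

definition frobenius :: "'a::finite_field alg_closure \<Rightarrow> 'a alg_closure" where
  "frobenius x = x ^ card (UNIV :: 'a set)"

lemma frobenius_add: "frobenius (x + y) = frobenius x + frobenius y"
proof -
  define q where "q = card (UNIV :: 'a set)"
  have "(x + y) ^ q = (\<Sum>k\<le>q. of_nat (q choose k) * x ^ k * y ^ (q - k))"
    by (rule binomial_ring)
  also have "\<dots> = (\<Sum>k\<in>{0, q}. of_nat (q choose k) * x ^ k * y ^ (q - k))"
  proof (intro sum.mono_neutral_right ballI)
    fix k assume "k \<in> {..q} - {0, q}"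
    then have "(of_nat (q choose k) :: 'a) = 0"
      unfolding q_def by (intro of_nat_card_choose_eq_0) auto
    then have "(of_nat (q choose k) :: 'a alg_closure) = 0"
      by (metis to_ac_0 to_ac_of_nat)
    then show "of_nat (q choose k) * x ^ k * y ^ (q - k) = 0" by simp
  qed auto
  also have "\<dots> = x ^ q + y ^ q"
    using card_finite_field_ge_2[where 'a = 'a] by (simp add: q_def add.commute)
  finally show ?thesis unfolding frobenius_def q_def .
qed

interpretation frobenius: field_hom "frobenius :: 'a::finite_field alg_closure \<Rightarrow> _"
proof unfold_locales
  show "frobenius (x + y) = frobenius x + frobenius y" for x y :: "'a alg_closure"
    by (rule frobenius_add)
qed (use card_finite_field_ge_2[where 'a = 'a] in \<open>simp_all add: frobenius_def power_mult_distrib\<close>)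

lemma frobenius_to_ac [simp]: "frobenius (to_ac a) = to_ac a"
  by (simp add: frobenius_def finite_field_power_card_eq_same flip: to_ac_power)

lemma frobenius_fixed_iff: "frobenius x = x \<longleftrightarrow> x \<in> range (to_ac :: 'a::finite_field \<Rightarrow> _)"
proof
  assume fixed: "frobenius x = x"
  define q where "q = card (UNIV :: 'a set)"
  define P :: "'a alg_closure poly" where "P = monom 1 q - [:0, 1:]"
  define R where "R = {y. poly P y = 0}"
  have "q \<ge> 2" unfolding q_def by (rule card_finite_field_ge_2)
  then have "coeff P q = 1" by (simp add: P_def coeff_monom coeff_pCons split: nat.split)
  then have "P \<noteq> 0" by auto
  have mem_R: "y \<in> R \<longleftrightarrow> frobenius y = y" for y
    by (simp add: R_def P_def poly_monom frobenius_def q_def)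
  have "degree P \<le> q" unfolding P_def using \<open>q \<ge> 2\<close>
    by (intro degree_diff_le) (auto simp: degree_monom_le)
  then have card_le: "card R \<le> card (range (to_ac :: 'a \<Rightarrow> _))"
    using card_poly_roots_bound[OF \<open>P \<noteq> 0\<close>] by (simp add: R_def card_image inj_to_ac q_def)
  have fin: "finite R" unfolding R_def by (rule poly_roots_finite[OF \<open>P \<noteq> 0\<close>])
  have sub: "range (to_ac :: 'a \<Rightarrow> _) \<subseteq> R"
    by (auto simp: mem_R)
  have "card (range (to_ac :: 'a \<Rightarrow> _)) = card R"
    using card_mono[OF fin sub] card_le by linarith
  then have "range (to_ac :: 'a \<Rightarrow> _) = R"
    by (rule card_subset_eq[OF fin sub])
  then show "x \<in> range to_ac" using mem_R fixed by blast
next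
  assume "x \<in> range to_ac"
  then show "frobenius x = x" by auto
qed

lemma surj_frobenius: "surj (frobenius :: 'a::finite_field alg_closure \<Rightarrow> _)"
  using card_finite_field_ge_2[where 'a = 'a]
  by (metis frobenius_def nth_root_exists surjI zero_less_numeral less_le_trans)

interpretation map3_frobenius: inj_idom_hom "map3 (frobenius :: 'a::finite_field alg_closure \<Rightarrow> _)"
  by (rule frobenius.inj_idom_hom_map3)

lemma prime_elem_map3_frobenius: "prime_elem G \<Longrightarrow> prime_elem (map3 frobenius G)"
proof -
  interpret frobenius: field_isom frobenius
    by (intro field_isom.intro frobenius.field_hom_axioms surjective.intro surj_frobenius)
  interpret map3_frobenius: idom_isom "map3 frobenius"
    by (rule frobenius.idom_isom_map3)
  show "prime_elem G \<Longrightarrow> prime_elem (map3 frobenius G)"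
    by (rule map3_frobenius.prime_elem_hom)
qed

section \<open>Descent to the finite field\<close>

interpretation to_ac: field_hom "to_ac :: 'a::field \<Rightarrow> 'a alg_closure"
  by unfold_locales simp_all

interpretation map3_to_ac: inj_idom_hom "map3 (to_ac :: 'a::field \<Rightarrow> 'a alg_closure)"
  by (rule to_ac.inj_idom_hom_map3)

lemma map3_frobenius_to_ac [simp]: "map3 frobenius (map3 to_ac F) = map3 to_ac F"
  by (simp add: map3_map3 o_def)

lemma frobenius_fixed_poly3_descends:
  assumes "map3 frobenius G = G"
  shows "G \<in> range (map3 (to_ac :: 'a::finite_field \<Rightarrow> _))"
proof
  show "G = map3 to_ac (map3 of_ac G)"
  proof (rule poly3_eqI)
    fix i j k
    have "frobenius (coeff3 G i j k) = coeff3 G i j k"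
      using arg_cong[OF assms, of "\<lambda>G. coeff3 G i j k"] by (simp add: coeff3_map3)
    then show "coeff3 G i j k = coeff3 (map3 to_ac (map3 of_ac G)) i j k"
      by (simp add: coeff3_map3 frobenius_fixed_iff to_ac_of_ac)
  qed
qed rule

lemma frobenius_fixed_factor_of_irreducible:
  fixes F :: "'a::finite_field poly3"
  assumes irr: "irreducible F" and FAB: "map3 to_ac F = A * B"
    and A: "map3 frobenius A = A" "A \<noteq> 0"
  shows "is_unit A \<or> is_unit B"
proof -
  have "A * map3 frobenius B = map3 frobenius (A * B)"
    using A(1) by (simp add: map3_frobenius.hom_mult)
  also have "\<dots> = A * B" by (simp flip: FAB)
  finally have "map3 frobenius B = B" using A(2) by simp
  then obtain B0 where B0: "B = map3 to_ac B0" using frobenius_fixed_poly3_descends by blast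
  obtain A0 where A0: "A = map3 to_ac A0" using frobenius_fixed_poly3_descends A(1) by blast
  have "F = A0 * B0" using FAB by (simp add: A0 B0 flip: map3_to_ac.hom_mult)
  with irr have "is_unit A0 \<or> is_unit B0" by (rule irreducibleD)
  then show ?thesis by (auto simp: A0 B0 to_ac.is_unit_map3_iff)
qed

lemma frobenius_fixed_rescaling:
  assumes G: "map3 frobenius G = const3 u * G" and c: "coeff3 G i j k \<noteq> 0"
  shows "map3 frobenius (const3 (inverse (coeff3 G i j k)) * G) =
    const3 (inverse (coeff3 G i j k)) * G"
proof -
  have coeff_G: "frobenius (coeff3 G i' j' k') = u * coeff3 G i' j' k'" for i' j' k'
    using arg_cong[OF G, of "\<lambda>G. coeff3 G i' j' k'"] by (simp add: coeff3_map3 coeff3_const3_mult)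
  then have "u \<noteq> 0" using c by (metis frobenius.hom_0_iff mult_zero_left)
  show ?thesis
  proof (rule poly3_eqI)
    fix i' j' k'
    have "coeff3 (map3 frobenius (const3 (inverse (coeff3 G i j k)) * G)) i' j' k' =
        inverse (frobenius (coeff3 G i j k)) * frobenius (coeff3 G i' j' k')"
      by (simp add: coeff3_map3 coeff3_const3_mult frobenius.hom_mult frobenius.hom_inverse)
    also have "\<dots> = inverse (coeff3 G i j k) * coeff3 G i' j' k'"
      using \<open>u \<noteq> 0\<close> by (simp add: coeff_G)
    finally show "coeff3 (map3 frobenius (const3 (inverse (coeff3 G i j k)) * G)) i' j' k' =
        coeff3 (const3 (inverse (coeff3 G i j k)) * G) i' j' k'"
      by (simp add: coeff3_const3_mult)
  qed
qed

section \<open>Rational points on a transverse line\<close>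

lemma cross_eq_0_imp_proportional:
  fixes v0 v1 v2 w0 w1 w2 :: "'b::field"
  assumes "v1 * w2 = v2 * w1" "v2 * w0 = v0 * w2" "v0 * w1 = v1 * w0" "nonzero3 w0 w1 w2"
  shows "\<exists>t. v0 = t * w0 \<and> v1 = t * w1 \<and> v2 = t * w2"
proof -
  consider "w0 \<noteq> 0" | "w1 \<noteq> 0" | "w2 \<noteq> 0" using assms(4) by (auto simp: nonzero3_def)
  then show ?thesis
  proof cases
    case 1
    then show ?thesis using assms by (intro exI[of _ "v0 / w0"]) (auto simp: field_simps)
  next
    case 2
    then show ?thesis using assms by (intro exI[of _ "v1 / w1"]) (auto simp: field_simps)
  next
    case 3
    then show ?thesis using assms by (intro exI[of _ "v2 / w2"]) (auto simp: field_simps)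
  qed
qed

lemma orthogonal_imp_proportional_cross:
  fixes a0 a1 a2 b0 b1 b2 v0 v1 v2 :: "'b::field"
  assumes "nonzero3 (a1 * b2 - a2 * b1) (a2 * b0 - a0 * b2) (a0 * b1 - a1 * b0)"
    and "v0 * a0 + v1 * a1 + v2 * a2 = 0" "v0 * b0 + v1 * b1 + v2 * b2 = 0"
  shows "\<exists>t. v0 = t * (a1 * b2 - a2 * b1) \<and> v1 = t * (a2 * b0 - a0 * b2) \<and>
    v2 = t * (a0 * b1 - a1 * b0)"
proof (rule cross_eq_0_imp_proportional[OF _ _ _ assms(1)])
  let ?va = "v0 * a0 + v1 * a1 + v2 * a2" and ?vb = "v0 * b0 + v1 * b1 + v2 * b2"
  have "v1 * (a0 * b1 - a1 * b0) - v2 * (a2 * b0 - a0 * b2) = a0 * ?vb - b0 * ?va"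
    "v2 * (a1 * b2 - a2 * b1) - v0 * (a0 * b1 - a1 * b0) = a1 * ?vb - b1 * ?va"
    "v0 * (a2 * b0 - a0 * b2) - v1 * (a1 * b2 - a2 * b1) = a2 * ?vb - b2 * ?va"
    by (simp_all add: algebra_simps)
  then show "v1 * (a0 * b1 - a1 * b0) = v2 * (a2 * b0 - a0 * b2)"
    "v2 * (a1 * b2 - a2 * b1) = v0 * (a0 * b1 - a1 * b0)"
    "v0 * (a2 * b0 - a0 * b2) = v1 * (a1 * b2 - a2 * b1)"
    using assms(2,3) by simp_all
qed

lemma orthogonal_to_independent_pair_imp_proportional:
  fixes a0 a1 a2 b0 b1 b2 l0 l1 l2 g0 g1 g2 :: "'b::field"
  assumes indep: "nonzero3 (a1 * b2 - a2 * b1) (a2 * b0 - a0 * b2) (a0 * b1 - a1 * b0)"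
    and "l0 * a0 + l1 * a1 + l2 * a2 = 0" "l0 * b0 + l1 * b1 + l2 * b2 = 0"
    and "g0 * a0 + g1 * a1 + g2 * a2 = 0" "g0 * b0 + g1 * b1 + g2 * b2 = 0"
    and g: "nonzero3 g0 g1 g2"
  shows "\<exists>c. l0 = c * g0 \<and> l1 = c * g1 \<and> l2 = c * g2"
proof -
  obtain s where s: "l0 = s * (a1 * b2 - a2 * b1)" "l1 = s * (a2 * b0 - a0 * b2)"
    "l2 = s * (a0 * b1 - a1 * b0)"
    using orthogonal_imp_proportional_cross[OF indep assms(2,3)] by blast
  obtain t where t: "g0 = t * (a1 * b2 - a2 * b1)" "g1 = t * (a2 * b0 - a0 * b2)"
    "g2 = t * (a0 * b1 - a1 * b0)"
    using orthogonal_imp_proportional_cross[OF indep assms(4,5)] by blast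
  have "t \<noteq> 0" using g t by (auto simp: nonzero3_def)
  then show ?thesis using s t by (intro exI[of _ "s / t"]) simp
qed

lemma rational_point_if_frobenius_proportional:
  fixes x0 x1 x2 :: "'a::finite_field alg_closure"
  assumes "nonzero3 x0 x1 x2"
    and "frobenius x0 = t * x0" "frobenius x1 = t * x1" "frobenius x2 = t * x2"
  shows "rational_point to_ac x0 x1 x2"
proof -
  obtain x where x: "x \<noteq> 0" "frobenius x = t * x" using assms by (auto simp: nonzero3_def)
  then have "t \<noteq> 0" by (metis frobenius.hom_0_iff mult_zero_left)
  have "inverse x * y \<in> range to_ac" if "frobenius y = t * y" for y
    using x that \<open>t \<noteq> 0\<close>
    by (simp add: frobenius_fixed_iff[symmetric] frobenius.hom_mult frobenius.hom_inverse)
  then show ?thesis unfolding rational_point_def using assms(2-4) x(1)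
    by (intro exI[of _ "inverse x"]) simp
qed

lemma frobenius_nonclassical_gradient:
  fixes F :: "'a::finite_field poly3"
  assumes "frobenius_nonclassical F" "eval3 (map3 to_ac F) x0 x1 x2 = 0"
  shows "frobenius x0 * eval3 (pd0 (map3 to_ac F)) x0 x1 x2
    + frobenius x1 * eval3 (pd1 (map3 to_ac F)) x0 x1 x2
    + frobenius x2 * eval3 (pd2 (map3 to_ac F)) x0 x1 x2 = 0"
proof -
  let ?q = "card (UNIV :: 'a set)"
  obtain R where "X0 ^ ?q * pd0 F + X1 ^ ?q * pd1 F + X2 ^ ?q * pd2 F = F * R"
    using assms(1) unfolding frobenius_nonclassical_def by (elim dvdE)
  from arg_cong[OF this, of "map3 to_ac"]
  have "X0 ^ ?q * pd0 (map3 to_ac F) + X1 ^ ?q * pd1 (map3 to_ac F) + X2 ^ ?q * pd2 (map3 to_ac F) =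
      map3 to_ac F * map3 to_ac R"
    by (simp add: map3_to_ac.hom_add map3_to_ac.hom_mult map3_to_ac.hom_power to_ac.map3_X
        to_ac.map3_pd0 to_ac.map3_pd1 to_ac.map3_pd2)
  from arg_cong[OF this, of "\<lambda>G. eval3 G x0 x1 x2"] show ?thesis
    using assms(2)
    by (simp add: eval3_hom.hom_add eval3_hom.hom_mult eval3_hom.hom_power frobenius_def)
qed

lemma frobenius_on_rational_line:
  assumes "to_ac l0 * x0 + to_ac l1 * x1 + to_ac l2 * x2 = 0"
  shows "to_ac l0 * frobenius x0 + to_ac l1 * frobenius x1 + to_ac l2 * frobenius x2 = 0"
  using arg_cong[OF assms, of frobenius] by (simp add: frobenius.hom_add frobenius.hom_mult)

lemma rational_points_on_transverse_line:
  fixes F :: "'a::finite_field poly3"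
  assumes hom: "homogeneous3 F d" and fnc: "frobenius_nonclassical F"
    and trans: "transverse (map3 to_ac F) (to_ac l0) (to_ac l1) (to_ac l2)"
    and on_C: "on_curve (map3 to_ac F) x0 x1 x2"
    and on_L: "on_line (to_ac l0) (to_ac l1) (to_ac l2) x0 x1 x2"
  shows "rational_point to_ac x0 x1 x2"
proof -
  define g0 g1 g2 where "g0 = eval3 (pd0 (map3 to_ac F)) x0 x1 x2"
    and "g1 = eval3 (pd1 (map3 to_ac F)) x0 x1 x2" and "g2 = eval3 (pd2 (map3 to_ac F)) x0 x1 x2"
  have x: "nonzero3 x0 x1 x2" "eval3 (map3 to_ac F) x0 x1 x2 = 0"
    using on_C by (simp_all add: on_curve_def)
  have g_x: "g0 * x0 + g1 * x1 + g2 * x2 = 0"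
    using euler_at_zero[OF homogeneous3_map3[where f = to_ac, OF to_ac_0 hom] x(2)]
    by (simp add: g0_def g1_def g2_def mult.commute)
  have g_fx: "g0 * frobenius x0 + g1 * frobenius x1 + g2 * frobenius x2 = 0"
    using frobenius_nonclassical_gradient[OF fnc x(2)]
    by (simp add: g0_def g1_def g2_def mult.commute)
  have l_x: "to_ac l0 * x0 + to_ac l1 * x1 + to_ac l2 * x2 = 0"
    using on_L by (simp add: on_line_def)
  have not_singular: "\<not> singular_point (map3 to_ac F) x0 x1 x2"
    using trans on_L by (auto simp: transverse_def)
  then have g_nz: "nonzero3 g0 g1 g2"
    using on_C by (auto simp: singular_point_def nonzero3_def g0_def g1_def g2_def)
  show ?thesis
  proof (cases "nonzero3 (x1 * frobenius x2 - x2 * frobenius x1)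
      (x2 * frobenius x0 - x0 * frobenius x2) (x0 * frobenius x1 - x1 * frobenius x0)")
    case True
    obtain c where "to_ac l0 = c * g0" "to_ac l1 = c * g1" "to_ac l2 = c * g2"
      using orthogonal_to_independent_pair_imp_proportional[OF True l_x
          frobenius_on_rational_line[OF l_x] g_x g_fx g_nz] by blast
    then have "tangent_at (map3 to_ac F) (to_ac l0) (to_ac l1) (to_ac l2) x0 x1 x2"
      using on_C on_L not_singular
      by (auto simp: tangent_at_def smooth_point_def g0_def g1_def g2_def)
    then show ?thesis using trans by (simp add: transverse_def)
  next
    case False
    then obtain t where "frobenius x0 = t * x0" "frobenius x1 = t * x1" "frobenius x2 = t * x2"
      using x(1)
        cross_eq_0_imp_proportional[of "frobenius x1" x2 "frobenius x2" x1 x0 "frobenius x0"]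
      by (auto simp: nonzero3_def mult.commute)
    then show ?thesis using x(1) by (rule rational_point_if_frobenius_proportional[rotated])
  qed
qed

section \<open>Zeros of homogeneous polynomials on a line\<close>

lemma line_parametrization:
  fixes l0 l1 l2 :: "'b::field"
  assumes "nonzero3 l0 l1 l2"
  obtains u0 u1 u2 v0 v1 v2
  where "l0 * u0 + l1 * u1 + l2 * u2 = 0" "l0 * v0 + l1 * v1 + l2 * v2 = 0" "nonzero3 v0 v1 v2"
    "\<And>t. nonzero3 (u0 + t * v0) (u1 + t * v1) (u2 + t * v2)"
proof -
  consider "l0 \<noteq> 0" | "l0 = 0" "l1 \<noteq> 0" | "l0 = 0" "l1 = 0" "l2 \<noteq> 0"
    using assms by (auto simp: nonzero3_def)
  then show ?thesis
  proof cases
    case 1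
    then show ?thesis
      by (intro that[of "-l1" l0 0 "-l2" 0 l0]) (auto simp: nonzero3_def algebra_simps)
  next
    case 2
    then show ?thesis
      by (intro that[of 1 0 0 0 "-l2" l1]) (auto simp: nonzero3_def algebra_simps)
  next
    case 3
    then show ?thesis by (intro that[of 1 0 0 0 1 0]) (auto simp: nonzero3_def)
  qed
qed

definition restrict_to_line :: "'a::comm_ring_1 poly3 \<Rightarrow> 'a \<Rightarrow> 'a \<Rightarrow> 'a \<Rightarrow> 'a \<Rightarrow> 'a \<Rightarrow> 'a \<Rightarrow> 'a poly" where
  "restrict_to_line G a0 a1 a2 b0 b1 b2 =
    eval3 (map3 (\<lambda>c. [:c:]) G) [:a0, b0:] [:a1, b1:] [:a2, b2:]"

lemma poly_restrict_to_line:
  "poly (restrict_to_line G a0 a1 a2 b0 b1 b2) t =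
    eval3 G (a0 + t * b0) (a1 + t * b1) (a2 + t * b2)"
proof -
  have "map3 (\<lambda>p. poly p t) (map3 (\<lambda>c. [:c:]) G) = G"
    by (simp add: map3_map3 o_def) (simp add: map3_def map_poly_id'[abs_def])
  then show ?thesis
    by (simp add: restrict_to_line_def poly_hom.hom_eval3 mult.commute)
qed

lemma infinite_UNIV_alg_closed: "infinite (UNIV :: 'a::alg_closed_field set)"
proof
  assume fin: "finite (UNIV :: 'a set)"
  define Q :: "'a poly" where "Q = (\<Prod>a\<in>UNIV. [:-a, 1:])"
  have "degree Q = card (UNIV :: 'a set)"
    unfolding Q_def by (subst degree_prod_sum_eq) auto
  moreover have "card (UNIV :: 'a set) > 0"
    using fin by (rule finite_UNIV_card_ge_0)
  ultimately have "degree (1 + Q) > 0"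
    by (subst degree_add_eq_right) simp_all
  then obtain x where "poly (1 + Q) x = 0" using alg_closed_imp_poly_has_root by blast
  moreover have "poly Q x = 0"
    using fin by (simp add: Q_def poly_prod prod_zero_iff)
  ultimately show False by simp
qed

lemma poly_eqI_nonzero_points:
  fixes p q :: "'a::idom poly"
  assumes "infinite (UNIV :: 'a set)" "\<And>s. s \<noteq> 0 \<Longrightarrow> poly p s = poly q s"
  shows "p = q"
proof (rule ccontr)
  assume "p \<noteq> q"
  then have "finite {s. poly (p - q) s = 0}" by (intro poly_roots_finite) simp
  moreover have "UNIV - {0} \<subseteq> {s. poly (p - q) s = 0}" using assms(2) by auto
  ultimately have "finite (UNIV - {0 :: 'a})" by (rule finite_subset[rotated])
  then show False using assms(1) by simp
qed

lemma homogeneous3_vanishes_at_infinity: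
  fixes G :: "'b::field poly3"
  assumes inf: "infinite (UNIV :: 'b set)" and hom: "homogeneous3 G e" and "e > 0"
    and const: "\<And>t. eval3 G (u0 + t * v0) (u1 + t * v1) (u2 + t * v2) = c"
  shows "eval3 G v0 v1 v2 = 0"
proof -
  define h where "h = restrict_to_line G v0 v1 v2 u0 u1 u2"
  have "poly h s = poly (monom c e) s" if "s \<noteq> 0" for s
  proof -
    have scale: "s * (w + inverse s * z) = z + s * w" for w z
      using that by (simp add: field_simps)
    have "poly h s =
        eval3 G (s * (u0 + inverse s * v0)) (s * (u1 + inverse s * v1)) (s * (u2 + inverse s * v2))"
      by (simp add: h_def poly_restrict_to_line scale)
    also have "\<dots> = s ^ e * c" by (simp add: eval3_homogeneous_scale[OF hom] const)
    finally show ?thesis by (simp add: poly_monom mult.commute)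
  qed
  then have "h = monom c e" using inf by (rule poly_eqI_nonzero_points[rotated])
  then have "poly h 0 = 0" using \<open>e > 0\<close> by (simp add: poly_monom)
  then show ?thesis by (simp add: h_def poly_restrict_to_line)
qed

lemma homogeneous3_has_zero_on_line:
  fixes G :: "'b::alg_closed_field poly3"
  assumes hom: "homogeneous3 G e" and "e > 0" and "nonzero3 l0 l1 l2"
  obtains x0 x1 x2 where "on_line l0 l1 l2 x0 x1 x2" "eval3 G x0 x1 x2 = 0"
proof -
  obtain u0 u1 u2 v0 v1 v2 where u: "l0 * u0 + l1 * u1 + l2 * u2 = 0"
    and v: "l0 * v0 + l1 * v1 + l2 * v2 = 0" "nonzero3 v0 v1 v2"
    and uv: "\<And>t. nonzero3 (u0 + t * v0) (u1 + t * v1) (u2 + t * v2)"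
    using line_parametrization[OF \<open>nonzero3 l0 l1 l2\<close>] by blast
  have on_L: "on_line l0 l1 l2 (u0 + t * v0) (u1 + t * v1) (u2 + t * v2)" for t
  proof -
    have "l0 * (u0 + t * v0) + l1 * (u1 + t * v1) + l2 * (u2 + t * v2) =
        (l0 * u0 + l1 * u1 + l2 * u2) + t * (l0 * v0 + l1 * v1 + l2 * v2)"
      by (simp add: algebra_simps)
    then show ?thesis using u v uv by (simp add: on_line_def)
  qed
  show ?thesis
  proof (cases "\<exists>t. poly (restrict_to_line G u0 u1 u2 v0 v1 v2) t = 0")
    case True
    then show ?thesis using that on_L by (auto simp: poly_restrict_to_line)
  next
    case False
    define r where "r = restrict_to_line G u0 u1 u2 v0 v1 v2"
    have "degree r = 0"
      using False alg_closed_imp_poly_has_root unfolding r_def by blast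
    then have r_const: "[:coeff r 0:] = r" by (rule degree_0_id)
    have "eval3 G (u0 + t * v0) (u1 + t * v1) (u2 + t * v2) = coeff r 0" for t
    proof -
      have "eval3 G (u0 + t * v0) (u1 + t * v1) (u2 + t * v2) = poly r t"
        by (simp add: r_def poly_restrict_to_line)
      also have "\<dots> = poly [:coeff r 0:] t" by (simp only: r_const)
      finally show ?thesis by simp
    qed
    then have "eval3 G v0 v1 v2 = 0"
      using homogeneous3_vanishes_at_infinity[OF infinite_UNIV_alg_closed hom \<open>e > 0\<close>] by blast
    then show ?thesis using that v by (simp add: on_line_def)
  qed
qed

section \<open>Geometric irreducibility\<close>

lemma rational_zero_of_prime_factor:
  fixes F :: "'a::finite_field poly3"
  assumes hom: "homogeneous3 F d" and fnc: "frobenius_nonclassical F" and "F \<noteq> 0"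
    and lnz: "nonzero3 l0 l1 l2"
    and trans: "transverse (map3 to_ac F) (to_ac l0) (to_ac l1) (to_ac l2)"
    and G: "prime G" "G dvd map3 to_ac F"
  obtains y0 y1 y2 where "on_line (to_ac l0) (to_ac l1) (to_ac l2) y0 y1 y2" "eval3 G y0 y1 y2 = 0"
    "frobenius y0 = y0" "frobenius y1 = y1" "frobenius y2 = y2"
proof -
  obtain H where FGH: "map3 to_ac F = G * H" using G(2) by (elim dvdE)
  have "homogeneous3 (G * H) d"
    using homogeneous3_map3[where f = to_ac, OF to_ac_0 hom] by (simp add: FGH)
  moreover have "G * H \<noteq> 0" using \<open>F \<noteq> 0\<close> by (simp flip: FGH)
  ultimately obtain e where homG: "homogeneous3 G e" using homogeneous3_factor by blast
  have "e > 0"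
  proof (rule ccontr)
    assume "\<not> e > 0"
    then have "G = const3 (coeff3 G 0 0 0)" using homG homogeneous3_0_eq_const3 by simp
    moreover have "G \<noteq> 0" using G(1) by auto
    ultimately have "is_unit G" by (metis is_unit_poly3_iff const3.hom_zero)
    then show False using G(1) by (simp add: prime_def prime_elem_def)
  qed
  have "nonzero3 (to_ac l0) (to_ac l1) (to_ac l2)" using lnz by (simp add: nonzero3_def)
  then obtain x0 x1 x2 where on_L: "on_line (to_ac l0) (to_ac l1) (to_ac l2) x0 x1 x2"
    and Gx: "eval3 G x0 x1 x2 = 0"
    by (rule homogeneous3_has_zero_on_line[OF homG \<open>e > 0\<close>])
  have "on_curve (map3 to_ac F) x0 x1 x2"
    using on_L Gx by (simp add: on_curve_def on_line_def FGH eval3_hom.hom_mult)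
  then obtain c
    where c: "c \<noteq> 0" "c * x0 \<in> range to_ac" "c * x1 \<in> range to_ac" "c * x2 \<in> range to_ac"
    using rational_points_on_transverse_line[OF hom fnc trans _ on_L]
    by (auto simp: rational_point_def)
  show ?thesis
  proof (rule that)
    have "to_ac l0 * (c * x0) + to_ac l1 * (c * x1) + to_ac l2 * (c * x2) =
        c * (to_ac l0 * x0 + to_ac l1 * x1 + to_ac l2 * x2)"
      by (simp add: algebra_simps)
    then show "on_line (to_ac l0) (to_ac l1) (to_ac l2) (c * x0) (c * x1) (c * x2)"
      using on_L c(1) by (simp add: on_line_def nonzero3_def)
    show "eval3 G (c * x0) (c * x1) (c * x2) = 0"
      by (simp add: eval3_homogeneous_scale[OF homG] Gx)
  qed (use c in \<open>simp_all add: frobenius_fixed_iff\<close>)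
qed

lemma prime_factor_dvd_frobenius_conjugate:
  fixes F :: "'a::finite_field poly3"
  assumes hom: "homogeneous3 F d" and fnc: "frobenius_nonclassical F" and "F \<noteq> 0"
    and lnz: "nonzero3 l0 l1 l2"
    and trans: "transverse (map3 to_ac F) (to_ac l0) (to_ac l1) (to_ac l2)"
    and G: "prime G" "G dvd map3 to_ac F"
  shows "G dvd map3 frobenius G"
proof (rule ccontr)
  assume not_dvd: "\<not> G dvd map3 frobenius G"
  obtain y0 y1 y2 where on_L: "on_line (to_ac l0) (to_ac l1) (to_ac l2) y0 y1 y2"
    and Gy: "eval3 G y0 y1 y2 = 0"
    and fixed: "frobenius y0 = y0" "frobenius y1 = y1" "frobenius y2 = y2"
    using rational_zero_of_prime_factor[OF assms] by blast
  have G'y: "eval3 (map3 frobenius G) y0 y1 y2 = 0"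
    using frobenius.hom_eval3[of G y0 y1 y2] Gy fixed by simp
  have "map3 frobenius G dvd map3 to_ac F"
    using map3_frobenius.hom_dvd[OF G(2)] by simp
  then obtain R where R: "map3 to_ac F = map3 frobenius G * R" by (elim dvdE)
  then have "G dvd map3 frobenius G * R" using G(2) by simp
  then have "G dvd R" using G(1) not_dvd by (simp add: prime_dvd_mult_iff)
  then obtain S where "R = G * S" by (elim dvdE)
  then have "map3 to_ac F = G * (map3 frobenius G * S)" using R by (simp add: ac_simps)
  moreover have "singular_point (G * (map3 frobenius G * S)) y0 y1 y2"
    using Gy G'y on_L by (intro singular_point_mult) (simp_all add: eval3_hom.hom_mult on_line_def)
  ultimately show False using trans on_L by (auto simp: transverse_def)
qed

lemma prime_factor_frobenius_stable_is_associated: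
  fixes F :: "'a::finite_field poly3"
  assumes irr: "irreducible F" and G: "prime G" "map3 to_ac F = G * H" "G dvd map3 frobenius G"
  shows "is_unit H"
proof -
  have "\<not> is_unit G" "G \<noteq> 0" using G(1) by (auto simp: prime_def prime_elem_def)
  obtain U where U: "map3 frobenius G = G * U" using G(3) by (elim dvdE)
  have "irreducible (map3 frobenius G)"
    using G(1)
    by (simp add: prime_elem_imp_irreducible prime_elem_map3_frobenius prime_imp_prime_elem)
  then have "is_unit U" using U \<open>\<not> is_unit G\<close> by (auto dest: irreducibleD)
  then obtain u where "map3 frobenius G = const3 u * G"
    using U by (auto simp: is_unit_poly3_iff mult.commute)
  obtain i j k where "coeff3 G i j k \<noteq> 0" using \<open>G \<noteq> 0\<close> poly3_eqI[of G 0] by auto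
  define c where "c = coeff3 G i j k"
  have "c \<noteq> 0" by (simp add: c_def \<open>coeff3 G i j k \<noteq> 0\<close>)
  have fixed: "map3 frobenius (const3 (inverse c) * G) = const3 (inverse c) * G"
    unfolding c_def by (rule frobenius_fixed_rescaling) fact+
  have "map3 to_ac F = (const3 (inverse c) * G) * (const3 c * H)"
    using G(2) \<open>c \<noteq> 0\<close> by (simp add: ac_simps flip: const3.hom_mult)
  moreover have "const3 (inverse c) * G \<noteq> 0"
    using \<open>G \<noteq> 0\<close> \<open>c \<noteq> 0\<close> by (simp add: const3_def)
  ultimately have "is_unit (const3 (inverse c) * G) \<or> is_unit (const3 c * H)"
    using frobenius_fixed_factor_of_irreducible[OF irr _ fixed] by blast
  then show ?thesis using \<open>\<not> is_unit G\<close> by (simp add: is_unit_mult_iff)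
qed

theorem lemma3p9:
  fixes F :: "'a::finite_field poly3" and d :: nat and l0 l1 l2 :: 'a
  assumes hom: "homogeneous3 F d"
    and irr: "irreducible F"
    and fnc: "frobenius_nonclassical F"
    and lnz: "nonzero3 l0 l1 l2"
    and trans: "transverse (map3 to_ac F) (to_ac l0) (to_ac l1) (to_ac l2)"
  shows "(\<forall>x0 x1 x2 :: 'a alg_closure.
            on_curve (map3 to_ac F) x0 x1 x2 \<and> on_line (to_ac l0) (to_ac l1) (to_ac l2) x0 x1 x2
            \<longrightarrow> rational_point to_ac x0 x1 x2)
         \<and> irreducible (map3 to_ac F)"
proof
  show "\<forall>x0 x1 x2. on_curve (map3 to_ac F) x0 x1 x2 \<and>
      on_line (to_ac l0) (to_ac l1) (to_ac l2) x0 x1 x2 \<longrightarrow> rational_point to_ac x0 x1 x2"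
    using rational_points_on_transverse_line[OF hom fnc trans] by blast
  have "F \<noteq> 0" "\<not> is_unit F" using irr by (auto simp: irreducible_def)
  then have "map3 to_ac F \<noteq> 0" "\<not> is_unit (map3 to_ac F)" by (simp_all add: to_ac.is_unit_map3_iff)
  then obtain G where G: "G dvd map3 to_ac F" "prime G" using prime_divisor_exists by blast
  then obtain H where FGH: "map3 to_ac F = G * H" by (elim dvdE)
  have "is_unit H"
    using prime_factor_frobenius_stable_is_associated[OF irr G(2) FGH
        prime_factor_dvd_frobenius_conjugate[OF hom fnc \<open>F \<noteq> 0\<close> lnz trans G(2,1)]] .
  then have "prime_elem (H * G)"
    using G(2) by (simp add: prime_elem_mult_unit_left prime_imp_prime_elem)
  then have "prime_elem (map3 to_ac F)" by (simp add: FGH mult.commute)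
  then show "irreducible (map3 to_ac F)" by (rule prime_elem_imp_irreducible)
qed

end
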